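(* Let $0<\mu<1$, $\bar\mu=1-\mu$, $0\le\lambda<1$, and let $\theta(t)$ be the largest eigenvalue of $G_t=D_t[\gamma_1\gamma_1'+\lambda(I-\gamma_1\gamma_1')]D_t$, where $D_t=\mathrm{diag}(1,e^{t/2})$ and $\gamma_1=(\sqrt{\bar\mu},\sqrt\mu)'$. Define $I_\theta(x)=\sup_{t\in\mathbb R}\{tx-\log\theta(t)\}$. Then for every $x\in(0,1)$, with $\bar x=1-x$ and $\Delta=1+\dfrac{4\lambda x\bar x}{\mu\bar\mu(1-\lambda)^2}$, $$I_\theta(x)=-x\log\left[\frac{\mu+\bar\mu\lambda}{1-2\bar x/(\sqrt\Delta+1)}\right]-\bar x\log\left[\frac{\bar\mu+\mu\lambda}{1-2x/(\sqrt\Delta+1)}\right],$$ the supremum being attained at $t_0=\log\left[\dfrac{(\bar\mu+\mu\lambda)[\sqrt\Delta-(\bar x-x)]}{(\mu+\bar\mu\lambda)[\sqrt\Delta+(\bar x-x)]}\right]$.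
   Context: $I$ is the $2\times2$ identity matrix. $\theta(t)$ is the Perron eigenvalue governing the moment generating function of partial sums of the stationary two-state Markov chain on $\{0,1\}$ with transition matrix $\lambda I+(1-\lambda)\mathbf 1(\bar\mu,\mu)$, where $\mathbf 1=(1,1)'$. *)

theory Defs
  imports "HOL-Analysis.Analysis"
begin

definition gamma1 :: "real \<Rightarrow> real^2" where
  "gamma1 \<mu> = vector [sqrt (1 - \<mu>), sqrt \<mu>]"

definition outer :: "real^2 \<Rightarrow> real^2^2" where
  "outer v = (\<chi> i j. v $ i * v $ j)"

definition Dmat :: "real \<Rightarrow> real^2^2" where
  "Dmat t = (\<chi> i j. if i = j then (if i = 1 then 1 else exp (t / 2)) else 0)"

definition Gmat :: "real \<Rightarrow> real \<Rightarrow> real \<Rightarrow> real^2^2" where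
  "Gmat \<mu> lam t = Dmat t ** (outer (gamma1 \<mu>) + lam *\<^sub>R (mat 1 - outer (gamma1 \<mu>))) ** Dmat t"

definition largest_eigenvalue :: "real^2^2 \<Rightarrow> real" where
  "largest_eigenvalue A = Max {l. \<exists>v. v \<noteq> 0 \<and> A *v v = l *\<^sub>R v}"

definition theta :: "real \<Rightarrow> real \<Rightarrow> real \<Rightarrow> real" where
  "theta \<mu> lam t = largest_eigenvalue (Gmat \<mu> lam t)"

definition I_theta :: "real \<Rightarrow> real \<Rightarrow> real \<Rightarrow> real" where
  "I_theta \<mu> lam x = (SUP t. t * x - ln (theta \<mu> lam t))"

end

(*
  The Perron root theta(t) is the larger root of z^2 - (a + b e^t) z + lam e^t, where
  a = mu_b + mu lam and b = mu + mu_b lam come from the trace and determinant of G_t.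
  Suppose z0, s0 > 0 and 0 <= c0 <= z0 satisfy z0 (1 - x) + c0 x = a, z0 x + c0 (1 - x) = b s0
  and z0 c0 = lam s0. Then z(t) = z0 e^(x (t - ln s0)) obeys z + lam e^t / z <= a + b e^t by
  convexity of exp, so z(t) <= theta(t), i.e. t x - ln theta(t) <= x ln s0 - ln z0, with
  equality at t = ln s0, where z0 and c0 are exactly the two roots. With r = sqrt Delta such a
  certificate is z0 = k (r + 1), c0 = k (r - 1), b s0 = k (r - (1 - 2x)), a = k (r + (1 - 2x)),
  and no differentiation is needed to identify the supremum.
*)

theory Submission
  imports Defs "HOL-Library.Quadratic_Discriminant"
begin

definition larger_root :: "real \<Rightarrow> real \<Rightarrow> real" where
  "larger_root T D = (T + sqrt (T\<^sup>2 - 4 * D)) / 2"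

lemma quadratic_eq_0_iff:
  fixes T D z :: real
  assumes "4 * D \<le> T\<^sup>2"
  shows "z\<^sup>2 - T * z + D = 0 \<longleftrightarrow> z = larger_root T D \<or> z = T - larger_root T D"
  using discriminant_nonneg[of 1 "- T" D z] assms
  by (auto simp: discrim_def larger_root_def field_simps)

lemma le_larger_root:
  fixes T D z :: real
  assumes "z\<^sup>2 - T * z + D \<le> 0"
  shows "z \<le> larger_root T D"
proof -
  have "(2 * z - T)\<^sup>2 \<le> T\<^sup>2 - 4 * D"
    using assms by (simp add: power2_eq_square algebra_simps)
  then have "2 * z - T \<le> sqrt (T\<^sup>2 - 4 * D)"
    by (metis abs_ge_self order_trans real_sqrt_abs real_sqrt_le_mono)
  then show ?thesis
    by (simp add: larger_root_def field_simps)
qed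

lemma larger_root_sum_prod:
  fixes z c :: real
  assumes "c \<le> z"
  shows "larger_root (z + c) (z * c) = z"
proof -
  have "(z + c)\<^sup>2 - 4 * (z * c) = (z - c)\<^sup>2"
    by (simp add: power2_eq_square algebra_simps)
  then show ?thesis
    using assms by (simp add: larger_root_def)
qed

lemma has_eigenvalue_iff_det:
  fixes A :: "real^'n^'n"
  shows "(\<exists>v. v \<noteq> 0 \<and> A *v v = l *\<^sub>R v) \<longleftrightarrow> det (A - l *\<^sub>R mat 1) = 0"
proof -
  have "(A - l *\<^sub>R mat 1) *v v = A *v v - l *\<^sub>R v" for v
    by (simp add: matrix_vector_mult_diff_rdistrib flip: scaleR_matrix_vector_assoc)
  then show ?thesis
    using invertible_det_nz[of "A - l *\<^sub>R mat 1"]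
    unfolding invertible_left_inverse matrix_left_invertible_ker by auto
qed

lemma largest_eigenvalue_2x2:
  fixes A :: "real^2^2"
  defines "T \<equiv> A$1$1 + A$2$2" and "D \<equiv> A$1$1 * A$2$2 - A$1$2 * A$2$1"
  assumes "4 * D \<le> T\<^sup>2"
  shows "largest_eigenvalue A = larger_root T D"
proof -
  have "det (A - l *\<^sub>R mat 1) = l\<^sup>2 - T * l + D" for l
    by (simp add: det_2 mat_def T_def D_def power2_eq_square algebra_simps)
  then have "{l. \<exists>v. v \<noteq> 0 \<and> A *v v = l *\<^sub>R v} = {larger_root T D, T - larger_root T D}"
    using quadratic_eq_0_iff[OF assms(3)] by (auto simp: has_eigenvalue_iff_det)
  moreover have "0 \<le> sqrt (T\<^sup>2 - 4 * D)"
    using assms(3) by simp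
  then have "T - larger_root T D \<le> larger_root T D"
    unfolding larger_root_def by (simp add: field_simps)
  ultimately show ?thesis
    unfolding largest_eigenvalue_def by (simp add: max_def)
qed

lemma Gmat_nth:
  assumes "0 \<le> \<mu>" "\<mu> \<le> 1"
  shows "Gmat \<mu> l t $1$1 = (1 - \<mu>) + \<mu> * l"
    and "Gmat \<mu> l t $1$2 = (1 - l) * (sqrt \<mu> * sqrt (1 - \<mu>)) * exp (t / 2)"
    and "Gmat \<mu> l t $2$1 = (1 - l) * (sqrt \<mu> * sqrt (1 - \<mu>)) * exp (t / 2)"
    and "Gmat \<mu> l t $2$2 = exp t * (\<mu> + (1 - \<mu>) * l)"
proof -
  have sqrt_sq: "sqrt \<mu> * (sqrt \<mu> * c) = \<mu> * c" for c
    using assms by (simp flip: mult.assoc)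
  show "Gmat \<mu> l t $1$1 = (1 - \<mu>) + \<mu> * l"
    and "Gmat \<mu> l t $1$2 = (1 - l) * (sqrt \<mu> * sqrt (1 - \<mu>)) * exp (t / 2)"
    and "Gmat \<mu> l t $2$1 = (1 - l) * (sqrt \<mu> * sqrt (1 - \<mu>)) * exp (t / 2)"
    and "Gmat \<mu> l t $2$2 = exp t * (\<mu> + (1 - \<mu>) * l)"
    using assms
    by (simp_all add: sqrt_sq Gmat_def Dmat_def outer_def gamma1_def matrix_matrix_mult_def
        sum_2 mat_def algebra_simps flip: exp_add)
qed

lemma theta_eq_larger_root:
  assumes "0 \<le> \<mu>" "\<mu> \<le> 1"
  shows "theta \<mu> lam t
           = larger_root ((1 - \<mu> + \<mu> * lam) + (\<mu> + (1 - \<mu>) * lam) * exp t) (lam * exp t)"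
proof -
  define p where "p = (1 - \<mu>) + \<mu> * lam"
  define w where "w = exp t * (\<mu> + (1 - \<mu>) * lam)"
  define q where "q = (1 - lam) * (sqrt \<mu> * sqrt (1 - \<mu>)) * exp (t / 2)"
  have "q * q = (1 - lam)\<^sup>2 * (sqrt \<mu> * sqrt \<mu>) * (sqrt (1 - \<mu>) * sqrt (1 - \<mu>))
                  * (exp (t / 2) * exp (t / 2))"
    by (simp add: q_def power2_eq_square mult_ac)
  also have "\<dots> = (1 - lam)\<^sup>2 * \<mu> * (1 - \<mu>) * exp t"
    using assms by (simp flip: exp_add)
  finally have det: "p * w - q * q = lam * exp t"
    by (simp add: p_def w_def power2_eq_square algebra_simps)
  have "(p + w)\<^sup>2 - 4 * (p * w - q * q) = (p - w)\<^sup>2 + 4 * (q * q)"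
    by (simp add: power2_eq_square algebra_simps)
  moreover have "0 \<le> (p - w)\<^sup>2 + 4 * (q * q)"
    by simp
  ultimately have real_spectrum: "4 * (p * w - q * q) \<le> (p + w)\<^sup>2"
    by linarith
  have "Gmat \<mu> lam t $1$1 = p" "Gmat \<mu> lam t $2$2 = w"
    "Gmat \<mu> lam t $1$2 = q" "Gmat \<mu> lam t $2$1 = q"
    unfolding p_def w_def q_def by (simp_all add: Gmat_nth[OF assms])
  then have "theta \<mu> lam t = larger_root (p + w) (p * w - q * q)"
    unfolding theta_def using largest_eigenvalue_2x2 real_spectrum by simp
  then show ?thesis
    unfolding det by (simp add: p_def w_def mult.commute)
qed

lemma exp_mult_le_convex_comb:
  fixes u w :: real
  assumes "0 \<le> u" "u \<le> 1"
  shows "exp (u * w) \<le> (1 - u) + u * exp w"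
  using convex_onD[OF exp_convex, of u 0 w] assms by simp

lemma ln_larger_root_ge:
  fixes a b lam x z0 c0 s0 t :: real
  assumes "0 \<le> x" "x \<le> 1" "0 < z0" "0 \<le> c0" "0 < s0"
    and "z0 * (1 - x) + c0 * x = a" "z0 * x + c0 * (1 - x) = b * s0" "c0 * z0 = lam * s0"
  shows "ln z0 + x * (t - ln s0) \<le> ln (larger_root (a + b * exp t) (lam * exp t))"
proof -
  define u where "u = t - ln s0"
  define z where "z = z0 * exp (x * u)"
  have "z > 0"
    using assms(3) by (simp add: z_def)
  have exp_t: "exp t = s0 * exp u"
    using assms(5) by (simp add: u_def exp_diff)
  have "lam * exp t = c0 * z0 * exp u"
    unfolding exp_t assms(8) by simp
  then have "lam * exp t / z = c0 * exp ((1 - x) * u)"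
    using assms(3) by (simp add: z_def left_diff_distrib exp_diff)
  then have "z + lam * exp t / z = z0 * exp (x * u) + c0 * exp ((1 - x) * u)"
    by (simp add: z_def)
  also have "\<dots> \<le> z0 * ((1 - x) + x * exp u) + c0 * (x + (1 - x) * exp u)"
    using exp_mult_le_convex_comb[of x u] exp_mult_le_convex_comb[of "1 - x" u] assms(1-4)
    by (intro add_mono mult_left_mono) auto
  also have "\<dots> = (z0 * (1 - x) + c0 * x) + (z0 * x + c0 * (1 - x)) * exp u"
    by (simp add: algebra_simps)
  also have "\<dots> = a + b * exp t"
    unfolding assms(6,7) exp_t by simp
  finally have "z\<^sup>2 - (a + b * exp t) * z + lam * exp t \<le> 0"
    using \<open>z > 0\<close> by (simp add: field_simps power2_eq_square)
  then have "z \<le> larger_root (a + b * exp t) (lam * exp t)"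
    by (rule le_larger_root)
  then have "ln z \<le> ln (larger_root (a + b * exp t) (lam * exp t))"
    using \<open>z > 0\<close> by simp
  then show ?thesis
    using assms(3) by (simp add: z_def u_def ln_mult)
qed

lemma legendre_ln_larger_root_certificate:
  fixes a b lam x z0 c0 s0 t :: real
  assumes "0 \<le> x" "x \<le> 1" "0 < z0" "0 \<le> c0" "c0 \<le> z0" "0 < s0"
    and "z0 * (1 - x) + c0 * x = a" "z0 * x + c0 * (1 - x) = b * s0" "c0 * z0 = lam * s0"
  shows "t * x - ln (larger_root (a + b * exp t) (lam * exp t)) \<le> x * ln s0 - ln z0"
    and "ln s0 * x - ln (larger_root (a + b * exp (ln s0)) (lam * exp (ln s0))) = x * ln s0 - ln z0"
proof -
  show "t * x - ln (larger_root (a + b * exp t) (lam * exp t)) \<le> x * ln s0 - ln z0"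
    using ln_larger_root_ge[OF assms(1-4,6-9)] by (simp add: algebra_simps)
  have "a + b * s0 = z0 + c0" "lam * s0 = z0 * c0"
    using assms(7-9) by (simp_all add: algebra_simps)
  then show "ln s0 * x - ln (larger_root (a + b * exp (ln s0)) (lam * exp (ln s0)))
               = x * ln s0 - ln z0"
    using assms(6) larger_root_sum_prod[OF assms(5)] by (simp add: mult.commute)
qed

lemma sqrt_Delta:
  fixes a b lam x :: real
  assumes "0 \<le> lam" "lam < a * b" "0 \<le> x" "x \<le> 1"
  defines "r \<equiv> sqrt (1 + 4 * lam * x * (1 - x) / (a * b - lam))"
  shows "1 \<le> r" and "a * b * (r\<^sup>2 - 1) = lam * (r\<^sup>2 - ((1 - x) - x)\<^sup>2)"
proof -
  have "0 \<le> 4 * lam * x * (1 - x) / (a * b - lam)"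
    using assms(1-4) by simp
  then have "r\<^sup>2 = 1 + 4 * lam * x * (1 - x) / (a * b - lam)" and "1 \<le> r"
    unfolding r_def by simp_all
  then show "1 \<le> r" and "a * b * (r\<^sup>2 - 1) = lam * (r\<^sup>2 - ((1 - x) - x)\<^sup>2)"
    using assms(2) by (simp_all add: field_simps power2_eq_square)
qed

lemma legendre_ln_larger_root:
  fixes a b lam x t :: real
  assumes "0 < a" "0 < b" "0 \<le> lam" "lam < a * b" "0 < x" "x < 1"
  defines "r \<equiv> sqrt (1 + 4 * lam * x * (1 - x) / (a * b - lam))" and "d \<equiv> (1 - x) - x"
  defines "V \<equiv> - x * ln (b / (1 - 2 * (1 - x) / (r + 1))) - (1 - x) * ln (a / (1 - 2 * x / (r + 1)))"
    and "t0 \<equiv> ln ((a * (r - d)) / (b * (r + d)))"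
  shows "t * x - ln (larger_root (a + b * exp t) (lam * exp t)) \<le> V"
    and "t0 * x - ln (larger_root (a + b * exp t0) (lam * exp t0)) = V"
proof -
  have "1 \<le> r" and r_eq: "a * b * (r\<^sup>2 - 1) = lam * (r\<^sup>2 - d\<^sup>2)"
    using sqrt_Delta[of lam a b x] assms(3-6) by (simp_all add: r_def d_def)
  have "\<bar>d\<bar> < 1"
    using assms(5,6) by (simp add: d_def)
  then have "0 < r + d" "0 < r - d"
    using \<open>1 \<le> r\<close> by linarith+
  \<comment> \<open>At the optimum \<open>t0 = ln s0\<close> the two roots are \<open>z0\<close> and \<open>c0\<close>.\<close>
  define k where "k = a / (r + d)"
  define s0 where "s0 = k * (r - d) / b"
  define z0 where "z0 = k * (r + 1)"
  define c0 where "c0 = k * (r - 1)"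
  have "0 < k" "k * (r + d) = a" "b * s0 = k * (r - d)"
    using \<open>0 < r + d\<close> assms(1,2) by (simp_all add: k_def s0_def)
  have "(r + d) * (k * b * (r\<^sup>2 - 1)) = (r + d) * (lam * (r - d))"
    using r_eq unfolding \<open>k * (r + d) = a\<close>[symmetric] by (simp add: power2_eq_square algebra_simps)
  then have "k * b * (r\<^sup>2 - 1) = lam * (r - d)"
    using \<open>0 < r + d\<close> by simp
  have "b * (c0 * z0) = k * (k * b * (r\<^sup>2 - 1))"
    by (simp add: c0_def z0_def power2_eq_square algebra_simps)
  also have "\<dots> = lam * (b * s0)"
    unfolding \<open>k * b * (r\<^sup>2 - 1) = lam * (r - d)\<close> \<open>b * s0 = k * (r - d)\<close> by simp
  finally have "c0 * z0 = lam * s0"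
    using assms(2) by (simp add: mult.left_commute)
  moreover have "z0 * (1 - x) + c0 * x = a" "z0 * x + c0 * (1 - x) = b * s0"
    unfolding \<open>b * s0 = k * (r - d)\<close> \<open>k * (r + d) = a\<close>[symmetric]
    by (simp_all add: z0_def c0_def d_def algebra_simps)
  moreover have "0 < s0" "0 < z0" "0 \<le> c0" "c0 \<le> z0"
    using \<open>0 < k\<close> \<open>0 < r - d\<close> \<open>1 \<le> r\<close> assms(2) by (simp_all add: s0_def z0_def c0_def)
  moreover have "V = x * ln s0 - ln z0"
  proof -
    have "1 - 2 * (1 - x) / (r + 1) = (r - d) / (r + 1)" "1 - 2 * x / (r + 1) = (r + d) / (r + 1)"
      using \<open>1 \<le> r\<close> by (simp_all add: d_def field_simps)
    then have "b / (1 - 2 * (1 - x) / (r + 1)) = z0 / s0" "a / (1 - 2 * x / (r + 1)) = z0"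
      using \<open>0 < r + d\<close> \<open>0 < r - d\<close> \<open>0 < k\<close> assms(2)
      unfolding \<open>k * (r + d) = a\<close>[symmetric] by (simp_all add: z0_def s0_def)
    then show ?thesis
      using \<open>0 < z0\<close> \<open>0 < s0\<close> by (simp add: V_def ln_div algebra_simps)
  qed
  moreover have "t0 = ln s0"
    unfolding t0_def s0_def k_def by (simp add: field_simps)
  ultimately show "t * x - ln (larger_root (a + b * exp t) (lam * exp t)) \<le> V"
    and "t0 * x - ln (larger_root (a + b * exp t0) (lam * exp t0)) = V"
    using legendre_ln_larger_root_certificate[of x z0 c0 s0 a b lam] assms(5,6) by simp_all
qed

theorem mainTheorem3:
  fixes \<mu> lam x :: real
  assumes "0 < \<mu>" "\<mu> < 1" "0 \<le> lam" "lam < 1" "0 < x" "x < 1"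
  defines "\<mu>b \<equiv> 1 - \<mu>" and "xb \<equiv> 1 - x"
  defines "\<Delta> \<equiv> 1 + 4 * lam * x * xb / (\<mu> * \<mu>b * (1 - lam)\<^sup>2)"
  defines "V \<equiv> - x * ln ((\<mu> + \<mu>b * lam) / (1 - 2 * xb / (sqrt \<Delta> + 1)))
              - xb * ln ((\<mu>b + \<mu> * lam) / (1 - 2 * x / (sqrt \<Delta> + 1)))"
  defines "t0 \<equiv> ln (((\<mu>b + \<mu> * lam) * (sqrt \<Delta> - (xb - x)))
                    / ((\<mu> + \<mu>b * lam) * (sqrt \<Delta> + (xb - x))))"
  shows "I_theta \<mu> lam x = V
         \<and> (\<forall>t. t * x - ln (theta \<mu> lam t) \<le> V)
         \<and> t0 * x - ln (theta \<mu> lam t0) = V"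
proof -
  define a where "a = \<mu>b + \<mu> * lam"
  define b where "b = \<mu> + \<mu>b * lam"
  have "0 < a" "0 < b"
    using assms(1-4) by (simp_all add: a_def b_def \<mu>b_def add_pos_nonneg)
  have ab: "a * b - lam = \<mu> * \<mu>b * (1 - lam)\<^sup>2"
    by (simp add: a_def b_def \<mu>b_def power2_eq_square algebra_simps)
  moreover have "0 < \<mu> * \<mu>b * (1 - lam)\<^sup>2"
    using assms(1-4) by (simp add: \<mu>b_def)
  ultimately have "lam < a * b"
    by linarith
  have \<Delta>_eq: "\<Delta> = 1 + 4 * lam * x * (1 - x) / (a * b - lam)"
    by (simp add: \<Delta>_def ab xb_def)
  have theta: "theta \<mu> lam t = larger_root (a + b * exp t) (lam * exp t)" for t
    using theta_eq_larger_root[of \<mu> lam t] assms(1,2) by (simp add: a_def b_def \<mu>b_def)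
  note legendre = legendre_ln_larger_root[OF \<open>0 < a\<close> \<open>0 < b\<close> assms(3) \<open>lam < a * b\<close> assms(5,6),
      folded \<Delta>_eq theta]
  have bound: "\<forall>t. t * x - ln (theta \<mu> lam t) \<le> V"
    and attained: "t0 * x - ln (theta \<mu> lam t0) = V"
    using legendre unfolding V_def t0_def a_def b_def xb_def by simp_all
  have "I_theta \<mu> lam x = V"
    unfolding I_theta_def by (rule cSup_eq_maximum) (use bound attained in auto)
  with bound attained show ?thesis
    by blast
qed

end
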